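(* Let $p\in\mathbb R$ and consider the third order linear differential equation $$x^2R'''(x)+4xR''(x)+(2-4p^2+4x^2)R'(x)-\frac{4p^2}{x}R(x)=0.$$ It admits a unique formal solution of the form $R(x)=\frac1\pi+\frac1\pi\sum_{n\ge1}\pi^{n}d_n x^{-n}$. For this solution $d_{2n-1}=0$ for all $n\ge1$, and $d_{2n}=c_{2n}$ where $$c_2=-\frac{p^2}{2\pi^2},\qquad c_{2n}=-\frac{1}{\pi^{2n}}\frac{(2n-3)!!}{(2n)!!}\prod_{l=0}^{n-1}(p^2-l^2)\quad(n\ge2),$$ equivalently $c_{2n+2}=\frac{1}{\pi^2}\frac{2n-1}{2(n+1)}(p^2-n^2)c_{2n}$ for $n\ge1$. In particular $c_{2n}=0$ for integer $p\ge0$ and $n>p$.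
   Context: The function $R(x)=\frac1\pi\rho_{(1),\infty}(x/\pi;2,p,0)$ satisfies this differential equation, where $\rho_{(1),\infty}(x;\beta,p,q)=\lim_{N\to\infty}\frac{2\pi}{N}\rho_{(1),N}(-\pi\,\mathrm{sgn}(x)+2\pi x/N)$ is the bulk-scaled one-point density at the spectrum singularity of the generalised circular Jacobi $\beta$ ensemble (probability density on $(-\pi,\pi]^N$ proportional to $\prod_{l=1}^N e^{q\theta_l}|1+e^{i\theta_l}|^{\beta p}\prod_{j<k}|e^{i\theta_k}-e^{i\theta_j}|^\beta$, one-point density $\rho_{(1),N}$ integrating to $N$). The double factorial $(2n-3)!!$ is the product of odd integers up to $2n-3$ (with $1!!=1$), and $(2n)!!=2^n n!$. *)

theory Defs
  imports Complex_Main
begin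

text \<open>A coefficient
function a :: int => real represents the formal sum of a k * x^k over all integers k.
The series appearing below have support bounded above (exponents <= 0), so all
operations are well defined coefficientwise.\<close>

definition fderiv :: "(int \<Rightarrow> real) \<Rightarrow> int \<Rightarrow> real" where
  "fderiv a k = of_int (k + 1) * a (k + 1)"

definition xmul :: "int \<Rightarrow> (int \<Rightarrow> real) \<Rightarrow> int \<Rightarrow> real" where
  "xmul j a k = a (k - j)"

definition ode_op :: "real \<Rightarrow> (int \<Rightarrow> real) \<Rightarrow> int \<Rightarrow> real" where
  "ode_op p a k =
     xmul 2 (fderiv (fderiv (fderiv a))) k
     + 4 * xmul 1 (fderiv (fderiv a)) k
     + (2 - 4 * p^2) * fderiv a k
     + 4 * xmul 2 (fderiv a) k
     - 4 * p^2 * xmul (-1) a k"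

definition Rseries :: "(nat \<Rightarrow> real) \<Rightarrow> int \<Rightarrow> real" where
  "Rseries d k = (if k = 0 then 1 / pi
                  else if k < 0 then (1 / pi) * pi ^ nat (- k) * d (nat (- k))
                  else 0)"

definition formal_solution :: "real \<Rightarrow> (nat \<Rightarrow> real) \<Rightarrow> bool" where
  "formal_solution p d \<longleftrightarrow> (\<forall>k. ode_op p (Rseries d) k = 0)"

fun dfact :: "nat \<Rightarrow> nat" where
  "dfact 0 = 1"
| "dfact (Suc 0) = 1"
| "dfact (Suc (Suc n)) = Suc (Suc n) * dfact n"

text \<open>c_even p n stands for c_(2n) (meaningful for n >= 1).\<close>
definition c_even :: "real \<Rightarrow> nat \<Rightarrow> real" where
  "c_even p n = (if n = 1 then - (p^2) / (2 * pi^2)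
                 else - (1 / pi ^ (2 * n)) * (real (dfact (2 * n - 3)) / real (dfact (2 * n)))
                        * (\<Prod>l<n. p^2 - (real l)^2))"

end

theory Submission
  imports Defs
begin

text \<open>On monomials the operator acts by x^(k+1) \<mapsto> (k+2)((k+1)^2 - 4p^2) x^k and
  x^(k-1) \<mapsto> 4(k-1) x^k, so the k-th coefficient of the image involves only a_(k+1) and
  a_(k-1).  For R = 1/pi + \<dots> the equations at k = 0 and k = -1 fix d_1 = 0 and d_2, and
  the others give d_(n+2) as an explicit multiple of d_n.  Hence the solution exists, is
  unique, vanishes at odd indices, and along even indices obeys the recurrence of c_(2n).
  For p = m a natural number the factor p^2 - m^2 of the product defining c_(2n) kills every
  c_(2n) with n > m.\<close>

lemma ode_op_two_term:
  "ode_op p a k = (of_int k + 2) * ((of_int k + 1)^2 - 4 * p^2) * a (k + 1)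
                  + 4 * (of_int k - 1) * a (k - 1)"
  unfolding ode_op_def xmul_def fderiv_def
  by (simp add: algebra_simps power2_eq_square)

lemma Rseries_neg: "n > 0 \<Longrightarrow> Rseries d (- int n) = pi ^ n / pi * d n"
  by (simp add: Rseries_def)

lemma Rseries_zero: "Rseries d 0 = 1 / pi"
  by (simp add: Rseries_def)

lemma Rseries_pos: "k > 0 \<Longrightarrow> Rseries d k = 0"
  by (simp add: Rseries_def)

lemma ode_op_Rseries_below:
  assumes "n \<ge> 1"
  shows "ode_op p (Rseries d) (- int n - 1)
           = pi ^ n / pi * ((1 - real n) * ((real n)^2 - 4 * p^2) * d n
                            - 4 * (real n + 2) * pi^2 * d (n + 2))"
proof -
  have "Rseries d (- int n - 1 + 1) = pi ^ n / pi * d n"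
    using assms Rseries_neg[of n d] by simp
  moreover have "Rseries d (- int n - 1 - 1) = pi ^ n / pi * pi^2 * d (n + 2)"
    using Rseries_neg[of "n + 2" d] by (simp add: algebra_simps power_add power2_eq_square)
  ultimately show ?thesis
    by (simp add: ode_op_two_term algebra_simps power2_eq_square)
qed

definition d_ratio :: "real \<Rightarrow> nat \<Rightarrow> real" where
  "d_ratio p n = (1 - real n) * ((real n)^2 - 4 * p^2) / (4 * (real n + 2) * pi^2)"

lemma formal_solution_iff:
  "formal_solution p d \<longleftrightarrow>
     d 1 = 0 \<and> d 2 = - (p^2) / (2 * pi^2) \<and> (\<forall>n\<ge>1. d (n + 2) = d_ratio p n * d n)"
proof -
  have pi_pos: "pi > 0" by simp
  have at_0: "ode_op p (Rseries d) 0 = - 4 * d 1"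
    using Rseries_neg[of 1 d] by (simp add: ode_op_two_term Rseries_pos)
  have at_minus_1: "ode_op p (Rseries d) (-1) = - 4 * p^2 / pi - 8 * pi * d 2"
    using Rseries_neg[of 2 d] by (simp add: ode_op_two_term Rseries_zero power2_eq_square)
  have "d 2 = - (p^2) / (2 * pi^2) \<longleftrightarrow> - 4 * p^2 / pi - 8 * pi * d 2 = 0"
    using pi_pos by (auto simp: field_simps power2_eq_square)
  moreover have "d (n + 2) = d_ratio p n * d n \<longleftrightarrow> ode_op p (Rseries d) (- int n - 1) = 0"
    if "n \<ge> 1" for n
  proof -
    have denom: "4 * (real n + 2) * pi^2 \<noteq> 0"
      by simp
    have "d (n + 2) = d_ratio p n * d n \<longleftrightarrow>
        (1 - real n) * ((real n)^2 - 4 * p^2) * d n - 4 * (real n + 2) * pi^2 * d (n + 2) = 0"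
      unfolding d_ratio_def times_divide_eq_left nonzero_eq_divide_eq[OF denom]
      by (auto simp: algebra_simps)
    then show ?thesis
      using that by (simp add: ode_op_Rseries_below)
  qed
  moreover have "(\<forall>k. ode_op p (Rseries d) k = 0) \<longleftrightarrow>
      ode_op p (Rseries d) 0 = 0 \<and> ode_op p (Rseries d) (-1) = 0
      \<and> (\<forall>n\<ge>1. ode_op p (Rseries d) (- int n - 1) = 0)"
  proof -
    have "k \<ge> 1 \<or> k = 0 \<or> k = -1 \<or> (\<exists>n\<ge>1. k = - int n - 1)" for k :: int
      by (cases "k \<le> -2") (auto intro!: exI[of _ "nat (- k - 1)"])
    moreover have "ode_op p (Rseries d) k = 0" if "k \<ge> 1" for k
      using that by (cases "k = 1") (simp_all add: ode_op_two_term Rseries_pos)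
    ultimately show ?thesis by metis
  qed
  ultimately show ?thesis
    unfolding formal_solution_def at_0 at_minus_1 by auto
qed

fun d_sol :: "real \<Rightarrow> nat \<Rightarrow> real" where
  "d_sol p 0 = 0"
| "d_sol p (Suc 0) = 0"
| "d_sol p (Suc (Suc 0)) = - (p^2) / (2 * pi^2)"
| "d_sol p (Suc (Suc (Suc n))) = d_ratio p (Suc n) * d_sol p (Suc n)"

lemma formal_solution_d_sol: "formal_solution p (d_sol p)"
  unfolding formal_solution_iff
  by (auto simp: numeral_2_eq_2 elim!: Suc_le_D[THEN exE])

lemma d_ratio_even:
  "d_ratio p (2 * n) = (1 / pi^2) * ((2 * real n - 1) / (2 * (real n + 1))) * (p^2 - (real n)^2)"
proof -
  have num: "(1 - real (2 * n)) * ((real (2 * n))^2 - 4 * p^2)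
               = 4 * ((2 * real n - 1) * (p^2 - (real n)^2))"
    by (simp add: algebra_simps power2_eq_square)
  have den: "4 * (real (2 * n) + 2) * pi^2 = 4 * (pi^2 * (2 * (real n + 1)))"
    by simp
  show ?thesis
    by (simp only: d_ratio_def num den mult_divide_mult_cancel_left_if) simp
qed

lemma dfact_pos: "dfact n > 0"
  by (induction n rule: dfact.induct) auto

lemma c_even_Suc:
  assumes "n \<ge> 1"
  shows "c_even p (n + 1) = (1 / pi^2) * ((2 * real n - 1) / (2 * (real n + 1)))
                            * (p^2 - (real n)^2) * c_even p n"
proof (cases "n = 1")
  case True
  have "(\<Prod>l<2. p^2 - (real l)^2) = p^2 * (p^2 - 1)"
    by (simp add: numeral_2_eq_2)
  with True show ?thesis
    by (simp add: c_even_def numeral_eq_Suc field_simps power2_eq_square)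
next
  case False
  with assms have "n \<ge> 2" by simp
  have "2 * (n + 1) - 3 = Suc (Suc (2 * n - 3))" using \<open>n \<ge> 2\<close> by simp
  then have dfact_odd: "real (dfact (2 * (n + 1) - 3)) = (2 * real n - 1) * dfact (2 * n - 3)"
    using \<open>n \<ge> 2\<close> by (simp only: dfact.simps) (simp add: of_nat_diff algebra_simps)
  have dfact_even: "real (dfact (2 * (n + 1))) = (2 * real n + 2) * dfact (2 * n)"
    by (simp add: algebra_simps)
  have c_next: "c_even p (n + 1) = - (1 / (pi^2 * pi ^ (2 * n)))
      * ((2 * real n - 1) * dfact (2 * n - 3) / ((2 * real n + 2) * dfact (2 * n)))
      * ((\<Prod>l<n. p^2 - (real l)^2) * (p^2 - (real n)^2))"
    using \<open>n \<ge> 2\<close> by (simp only: c_even_def dfact_odd dfact_even) (simp add: power_add power2_eq_square)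
  have c_cur: "c_even p n = - (1 / pi ^ (2 * n)) * (dfact (2 * n - 3) / dfact (2 * n))
      * (\<Prod>l<n. p^2 - (real l)^2)"
    using \<open>n \<ge> 2\<close> by (simp add: c_even_def)
  show ?thesis
    unfolding c_next c_cur using dfact_pos[of "2 * n"] by (simp add: field_simps)
qed

lemma formal_solution_coeffs:
  assumes "formal_solution p d" and "n \<ge> 1"
  shows "d (2 * n - 1) = 0 \<and> d (2 * n) = c_even p n"
  using assms(2)
proof (induction n rule: nat_induct_at_least)
  case base
  then show ?case using assms(1) by (simp add: formal_solution_iff c_even_def)
next
  case (Suc n)
  have rec: "\<And>m. m \<ge> 1 \<Longrightarrow> d (m + 2) = d_ratio p m * d m"
    using assms(1) by (simp add: formal_solution_iff)
  have "d (2 * Suc n - 1) = d_ratio p (2 * n - 1) * d (2 * n - 1)"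
    using rec[of "2 * n - 1"] Suc.hyps by (simp add: Suc_diff_Suc numeral_2_eq_2)
  then have odd: "d (2 * Suc n - 1) = 0"
    using Suc.IH by simp
  have "d (2 * Suc n) = d_ratio p (2 * n) * c_even p n"
    using rec[of "2 * n"] Suc.hyps Suc.IH by simp
  also have "\<dots> = c_even p (Suc n)"
    by (simp only: d_ratio_even c_even_Suc[OF Suc.hyps] Suc_eq_plus1)
  finally show ?case
    using odd by simp
qed

lemma c_even_vanishes_at_integer:
  assumes "n > m"
  shows "c_even (real m) n = 0"
proof -
  have "(\<Prod>l<n. (real m)^2 - (real l)^2) = 0"
    using assms by (intro prod_zero) auto
  then show ?thesis by (simp add: c_even_def)
qed

theorem proposition2p4:
  fixes p :: real
  shows "(\<exists>d. formal_solution p d)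
    \<and> (\<forall>d d'. formal_solution p d \<longrightarrow> formal_solution p d' \<longrightarrow> (\<forall>n\<ge>1. d n = d' n))
    \<and> (\<forall>d. formal_solution p d \<longrightarrow>
          (\<forall>n\<ge>1. d (2 * n - 1) = 0 \<and> d (2 * n) = c_even p n))
    \<and> (\<forall>n\<ge>1. c_even p (n + 1) = (1 / pi^2) * ((2 * real n - 1) / (2 * (real n + 1)))
                                   * (p^2 - (real n)^2) * c_even p n)
    \<and> (\<forall>m::nat. p = real m \<longrightarrow> (\<forall>n>m. c_even p n = 0))"
proof (intro conjI allI impI)
  show "\<exists>d. formal_solution p d"
    using formal_solution_d_sol by blast
next
  fix d d' :: "nat \<Rightarrow> real" and n :: nat
  assume "formal_solution p d" "formal_solution p d'" "n \<ge> 1"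
  moreover have "(n + 1) div 2 \<ge> 1" "n = 2 * ((n + 1) div 2) - 1 \<or> n = 2 * ((n + 1) div 2)"
    using \<open>n \<ge> 1\<close> by presburger+
  ultimately show "d n = d' n"
    using formal_solution_coeffs by metis
qed (use formal_solution_coeffs c_even_Suc c_even_vanishes_at_integer in auto)

end
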